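(* Let $A,B\in\mathbb{Z}$ with $4A^3+27B^2\ne0$, let $M$ be a positive integer with $\max\{10\sqrt{|A|},5\sqrt[3]{|B|}\}\le M$, let $D$ be a squarefree positive integer and $E_D: y^2=x^3+D^2Ax+D^3B$. Let $P,Q\in E_D(\mathbb{Q})$ with $MD\le x(P)<x(Q)$ and $y(P)y(Q)<0$. Then for every real $\mu$ with $1<\mu\le x(Q)/x(P)$, \[x(P)\le x(P+Q)\le \frac{(2\mu+1)^2}{(\mu-1)^2}\,x(P).\] *)

theory Defs
  imports Complex_Main "HOL-Computational_Algebra.Squarefree"
begin

text \<open>Rational points of the short Weierstrass curve y^2 = x^3 + a x + b.
  A point is None (the point at infinity O) or Some (x, y) with (x, y) on the curve.\<close>

definition on_curve :: "rat \<Rightarrow> rat \<Rightarrow> rat \<Rightarrow> rat \<Rightarrow> bool" where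
  "on_curve a b x y \<longleftrightarrow> y ^ 2 = x ^ 3 + a * x + b"

definition ec_add :: "rat \<Rightarrow> (rat \<times> rat) option \<Rightarrow> (rat \<times> rat) option \<Rightarrow> (rat \<times> rat) option" where
  "ec_add a P Q =
    (case P of None \<Rightarrow> Q
     | Some (x1, y1) \<Rightarrow>
       (case Q of None \<Rightarrow> P
        | Some (x2, y2) \<Rightarrow>
          (if x1 = x2 \<and> y1 = - y2 then None
           else
             (let l = (if x1 = x2 then (3 * x1 ^ 2 + a) / (2 * y1) else (y2 - y1) / (x2 - x1));
                  x3 = l ^ 2 - x1 - x2
              in Some (x3, l * (x1 - x3) - y1)))))"

end

theory Submission
  imports Defs
begin

text \<open>Clearing denominators in the chord formula gives
  \<open>x(P+Q) (x\<^sub>Q - x\<^sub>P)\<^sup>2 = (x\<^sub>P x\<^sub>Q + a)(x\<^sub>P + x\<^sub>Q) + 2b - 2 y\<^sub>P y\<^sub>Q\<close>.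
  The hypothesis on \<open>M\<close> makes \<open>|a| \<le> x\<^sub>P\<^sup>2/100\<close> and \<open>|b| \<le> x\<^sub>P\<^sup>3/125\<close>, so
  \<open>a\<close> and \<open>b\<close> only perturb the leading terms. Since \<open>-2 y\<^sub>P y\<^sub>Q > 0\<close> the right-hand side
  is at least \<open>x\<^sub>P (x\<^sub>Q - x\<^sub>P)\<^sup>2\<close>, and since \<open>y\<^sup>2 \<le> 2x\<^sup>3\<close> on both points it is at most
  \<open>x\<^sub>P (2x\<^sub>Q + x\<^sub>P)\<^sup>2\<close>. Finally \<open>(2x\<^sub>Q + x\<^sub>P)/(x\<^sub>Q - x\<^sub>P) = (2t + 1)/(t - 1)\<close> with
  \<open>t = x\<^sub>Q/x\<^sub>P\<close>, which decreases in \<open>t > 1\<close>.\<close>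

lemma ec_add_distinct_x:
  assumes "x1 \<noteq> x2" and "on_curve a b x1 y1" and "on_curve a b x2 y2"
  obtains x3 y3 where "ec_add a (Some (x1, y1)) (Some (x2, y2)) = Some (x3, y3)"
    and "x3 * (x2 - x1)^2 = (x1 * x2 + a) * (x1 + x2) + 2 * b - 2 * y1 * y2"
proof -
  define l where "l = (y2 - y1) / (x2 - x1)"
  define x3 where "x3 = l^2 - x1 - x2"
  have "ec_add a (Some (x1, y1)) (Some (x2, y2)) = Some (x3, l * (x1 - x3) - y1)"
    using assms(1) unfolding ec_add_def x3_def l_def Let_def by simp
  moreover have "x3 * (x2 - x1)^2 = (y2 - y1)^2 - (x1 + x2) * (x2 - x1)^2"
    using assms(1) unfolding x3_def l_def by (simp add: field_simps)
  moreover have "\<dots> = (x1 * x2 + a) * (x1 + x2) + 2 * b - 2 * y1 * y2"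
    using assms(2,3) unfolding on_curve_def by (simp add: power2_eq_square power3_eq_cube algebra_simps)
  ultimately show thesis using that by simp
qed

lemma root_bound_imp_power_bound:
  fixes x c m :: real
  assumes "0 < n" and "0 \<le> c" and "c * root n \<bar>x\<bar> \<le> m"
  shows "c^n * \<bar>x\<bar> \<le> m^n"
proof -
  have "(c * root n \<bar>x\<bar>)^n \<le> m^n"
    using assms by (intro power_mono) (auto simp: real_root_ge_zero)
  then show ?thesis
    using assms(1) by (simp add: power_mult_distrib)
qed

lemma scaled_coeff_bound:
  fixes A M D :: int and c :: nat and x :: "'a :: linordered_idom"
  assumes "0 < n" and "real c * root n \<bar>real_of_int A\<bar> \<le> real_of_int M"
    and "0 < D" and "of_int (M * D) \<le> x"
  shows "of_nat (c^n) * \<bar>of_int (D^n * A)\<bar> \<le> x^n"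
proof -
  have "real (c^n) * \<bar>real_of_int A\<bar> \<le> (real_of_int M)^n"
    using root_bound_imp_power_bound[OF assms(1) _ assms(2)] by simp
  then have "real_of_int (int (c^n) * \<bar>A\<bar>) \<le> real_of_int (M^n)"
    by simp
  then have coeff: "int (c^n) * \<bar>A\<bar> \<le> M^n"
    by (simp only: of_int_le_iff)
  have "0 \<le> real c * root n \<bar>real_of_int A\<bar>"
    by (simp add: real_root_ge_zero)
  then have M_nonneg: "0 \<le> M"
    using assms(2) by linarith
  have "int (c^n) * \<bar>D^n * A\<bar> = D^n * (int (c^n) * \<bar>A\<bar>)"
    using assms(3) by (simp add: abs_mult)
  also have "\<dots> \<le> D^n * M^n"
    using coeff assms(3) by (simp add: mult_left_mono)
  also have "\<dots> = (M * D)^n"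
    by (simp add: power_mult_distrib)
  finally have "of_int (int (c^n) * \<bar>D^n * A\<bar>) \<le> (of_int ((M * D)^n) :: 'a)"
    by (simp only: of_int_le_iff)
  then have "of_nat (c^n) * \<bar>of_int (D^n * A)\<bar> \<le> (of_int (M * D) :: 'a)^n"
    by simp
  also have "\<dots> \<le> x^n"
    using M_nonneg assms(3,4) by (intro power_mono) auto
  finally show ?thesis .
qed

lemma abs_mult_le_of_coeff_bound:
  fixes a s t :: "'a :: linordered_field"
  assumes "100 * \<bar>a\<bar> \<le> s^2" and "0 \<le> t"
  shows "100 * \<bar>a * t\<bar> \<le> s^2 * t"
  using mult_right_mono[OF assms] assms(2) by (simp add: abs_mult)

lemma on_curve_y_square_le:
  fixes a b s x y :: rat
  assumes "on_curve a b x y" and "0 < s" and "s \<le> x"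
    and "100 * \<bar>a\<bar> \<le> s^2" and "125 * \<bar>b\<bar> \<le> s^3"
  shows "y^2 \<le> 2 * x^3"
proof -
  have "100 * \<bar>a * x\<bar> \<le> s^2 * x"
    using assms(2,3) by (intro abs_mult_le_of_coeff_bound[OF assms(4)]) simp
  moreover have "s^2 * x \<le> x^3"
    using assms(2,3) by (simp add: power2_eq_square power3_eq_cube mult_mono)
  moreover have "s^3 \<le> x^3"
    using assms(2,3) by (intro power_mono) simp_all
  ultimately show ?thesis
    using assms(1,5) unfolding on_curve_def by linarith
qed

lemma abs_mult_le_of_y_squares:
  fixes s w y1 y2 :: "'a :: linordered_field"
  assumes "0 < s" and "0 < w" and "y1^2 \<le> 2 * s^3" and "y2^2 \<le> 2 * w^3"
  shows "2 * \<bar>y1 * y2\<bar> \<le> 3 * s * w^2 + 2 * s^2 * w"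
proof -
  have "(3 * w + 2 * s)^2 - 16 * (s * w) = (2 * s - w)^2 + 8 * w^2"
    by (simp add: power2_eq_square algebra_simps)
  then have amgm: "16 * (s * w) \<le> (3 * w + 2 * s)^2"
    using zero_le_power2[of "2 * s - w"] zero_le_power2[of w] by linarith
  have "(2 * \<bar>y1 * y2\<bar>)^2 = 4 * (y1^2 * y2^2)"
    by (simp add: power_mult_distrib)
  also have "\<dots> \<le> 4 * ((2 * s^3) * (2 * w^3))"
    using assms by (intro mult_left_mono mult_mono) auto
  also have "\<dots> = (s * w)^2 * (16 * (s * w))"
    by (simp add: power2_eq_square power3_eq_cube algebra_simps)
  also have "\<dots> \<le> (s * w)^2 * (3 * w + 2 * s)^2"
    using amgm by (rule mult_left_mono) simp
  also have "\<dots> = (3 * s * w^2 + 2 * s^2 * w)^2"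
    by (simp add: power2_eq_square algebra_simps)
  finally have "(2 * \<bar>y1 * y2\<bar>)^2 \<le> (3 * s * w^2 + 2 * s^2 * w)^2" .
  moreover have "0 \<le> 3 * s * w^2 + 2 * s^2 * w"
    using assms(1,2) by simp
  ultimately show ?thesis
    by (rule power2_le_imp_le)
qed

lemma add_x_numerator_ge:
  fixes a b s w y1 y2 :: "'a :: linordered_field"
  assumes "0 < s" and "s < w" and "100 * \<bar>a\<bar> \<le> s^2" and "125 * \<bar>b\<bar> \<le> s^3"
    and "y1 * y2 < 0"
  shows "s * (w - s)^2 \<le> (s * w + a) * (s + w) + 2 * b - 2 * y1 * y2"
proof -
  have "100 * \<bar>a * s\<bar> \<le> s^2 * s" "100 * \<bar>a * w\<bar> \<le> s^2 * w"
    using assms(1,2) by (auto intro: abs_mult_le_of_coeff_bound[OF assms(3)])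
  moreover have "s^2 * s \<le> s^2 * w" "0 < s^2 * s"
    using assms(1,2) by auto
  moreover have "(s * w + a) * (s + w) - s * (w - s)^2 = 3 * (s^2 * w) - s^2 * s + a * s + a * w"
    by (simp add: power2_eq_square algebra_simps)
  moreover have "s^3 = s^2 * s"
    by (simp add: power2_eq_square power3_eq_cube)
  ultimately show ?thesis
    using assms(4,5) by linarith
qed

lemma add_x_numerator_le:
  fixes a b s w y1 y2 :: "'a :: linordered_field"
  assumes "0 < s" and "s < w" and "100 * \<bar>a\<bar> \<le> s^2" and "125 * \<bar>b\<bar> \<le> s^3"
    and "y1^2 \<le> 2 * s^3" and "y2^2 \<le> 2 * w^3"
  shows "(s * w + a) * (s + w) + 2 * b - 2 * y1 * y2 \<le> s * (2 * w + s)^2"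
proof -
  have "100 * \<bar>a * s\<bar> \<le> s^2 * s" "100 * \<bar>a * w\<bar> \<le> s^2 * w"
    using assms(1,2) by (auto intro: abs_mult_le_of_coeff_bound[OF assms(3)])
  moreover have "0 < s^2 * s" "0 < s^2 * w"
    using assms(1,2) by auto
  moreover have "2 * \<bar>y1 * y2\<bar> \<le> 3 * s * w^2 + 2 * s^2 * w"
    using assms(1,2,5,6) by (intro abs_mult_le_of_y_squares) auto
  moreover have "s * (2 * w + s)^2 - (s * w + a) * (s + w)
      = 3 * s * w^2 + 3 * (s^2 * w) + s^2 * s - a * s - a * w"
    by (simp add: power2_eq_square algebra_simps)
  moreover have "s^3 = s^2 * s"
    by (simp add: power2_eq_square power3_eq_cube)
  ultimately show ?thesis
    using assms(4) by linarith
qed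

lemma chord_x_bounds:
  fixes a b s w y1 y2 x3 :: rat
  assumes "on_curve a b s y1" and "on_curve a b w y2" and "0 < s" and "s < w"
    and "100 * \<bar>a\<bar> \<le> s^2" and "125 * \<bar>b\<bar> \<le> s^3" and "y1 * y2 < 0"
    and x3: "x3 * (w - s)^2 = (s * w + a) * (s + w) + 2 * b - 2 * y1 * y2"
  shows "s \<le> x3" and "x3 * (w - s)^2 \<le> s * (2 * w + s)^2"
proof -
  have "s * (w - s)^2 \<le> x3 * (w - s)^2"
    using add_x_numerator_ge[OF assms(3-7)] x3 by simp
  then show "s \<le> x3"
    using assms(4) by simp
  have "y1^2 \<le> 2 * s^3" "y2^2 \<le> 2 * w^3"
    using on_curve_y_square_le[OF assms(1,3) order_refl assms(5,6)]
      on_curve_y_square_le[OF assms(2,3) less_imp_le[OF assms(4)] assms(5,6)] by auto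
  then show "x3 * (w - s)^2 \<le> s * (2 * w + s)^2"
    using add_x_numerator_le[OF assms(3-6)] x3 by simp
qed

lemma le_ratio_bound:
  fixes X Y Z \<mu> :: real
  assumes "0 < X" and "X < Y" and "Z * (Y - X)^2 \<le> X * (2 * Y + X)^2"
    and "1 < \<mu>" and "\<mu> \<le> Y / X"
  shows "Z \<le> (2 * \<mu> + 1)^2 / (\<mu> - 1)^2 * X"
proof -
  have "\<mu> * X \<le> Y"
    using assms(1,5) by (simp add: le_divide_eq)
  then have "(2 * Y + X) * (\<mu> - 1) \<le> (2 * \<mu> + 1) * (Y - X)"
    by (simp add: algebra_simps)
  then have ratio: "(2 * Y + X) / (Y - X) \<le> (2 * \<mu> + 1) / (\<mu> - 1)"
    using assms(2,4) by (simp add: divide_le_eq le_divide_eq mult.commute)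
  have "Z \<le> X * ((2 * Y + X) / (Y - X))^2"
    using assms(2,3) by (simp add: power_divide le_divide_eq)
  also have "\<dots> \<le> X * ((2 * \<mu> + 1) / (\<mu> - 1))^2"
    using assms(1,2) ratio by (intro mult_left_mono power_mono) auto
  finally show ?thesis
    by (simp add: power_divide mult.commute)
qed

theorem lemma3p7:
  fixes A B M D :: int and xP yP xQ yQ :: rat and \<mu> :: real
  assumes disc: "4 * A ^ 3 + 27 * B ^ 2 \<noteq> 0"
    and Mpos: "M > 0"
    and Mbound: "max (10 * sqrt \<bar>real_of_int A\<bar>) (5 * root 3 \<bar>real_of_int B\<bar>) \<le> real_of_int M"
    and Dsq: "squarefree D" and Dpos: "D > 0"
    and P_on: "on_curve (of_int (D ^ 2 * A)) (of_int (D ^ 3 * B)) xP yP"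
    and Q_on: "on_curve (of_int (D ^ 2 * A)) (of_int (D ^ 3 * B)) xQ yQ"
    and MD_le: "of_int (M * D) \<le> xP"
    and xlt: "xP < xQ"
    and yneg: "yP * yQ < 0"
    and mu1: "1 < \<mu>"
    and mu2: "\<mu> \<le> real_of_rat xQ / real_of_rat xP"
  shows "\<exists>x3 y3. ec_add (of_int (D ^ 2 * A)) (Some (xP, yP)) (Some (xQ, yQ)) = Some (x3, y3)
           \<and> xP \<le> x3
           \<and> real_of_rat x3 \<le> (2 * \<mu> + 1) ^ 2 / (\<mu> - 1) ^ 2 * real_of_rat xP"
proof -
  define a b :: rat where "a = of_int (D ^ 2 * A)" and "b = of_int (D ^ 3 * B)"
  have P: "on_curve a b xP yP" and Q: "on_curve a b xQ yQ"
    using P_on Q_on unfolding a_def b_def .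
  have ha: "100 * \<bar>a\<bar> \<le> xP^2"
    using scaled_coeff_bound[of 2 10 A, OF _ _ Dpos MD_le] Mbound
    unfolding a_def sqrt_def by simp
  have hb: "125 * \<bar>b\<bar> \<le> xP^3"
    using scaled_coeff_bound[of 3 5 B, OF _ _ Dpos MD_le] Mbound
    unfolding b_def by simp
  have "(0::rat) < of_int (M * D)"
    using Mpos Dpos by simp
  then have xP_pos: "0 < xP"
    using MD_le by linarith
  obtain x3 y3 where add: "ec_add a (Some (xP, yP)) (Some (xQ, yQ)) = Some (x3, y3)"
    and x3: "x3 * (xQ - xP)^2 = (xP * xQ + a) * (xP + xQ) + 2 * b - 2 * yP * yQ"
    using ec_add_distinct_x[OF _ P Q] xlt by blast
  note bounds = chord_x_bounds[OF P Q xP_pos xlt ha hb yneg x3]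
  have "real_of_rat (x3 * (xQ - xP)^2) \<le> real_of_rat (xP * (2 * xQ + xP)^2)"
    using bounds(2) by (simp only: of_rat_less_eq)
  then have upper: "real_of_rat x3 * (real_of_rat xQ - real_of_rat xP)^2
      \<le> real_of_rat xP * (2 * real_of_rat xQ + real_of_rat xP)^2"
    by (simp add: of_rat_mult of_rat_power of_rat_add of_rat_diff)
  have "real_of_rat x3 \<le> (2 * \<mu> + 1)^2 / (\<mu> - 1)^2 * real_of_rat xP"
    using le_ratio_bound[OF _ _ upper mu1 mu2] xP_pos xlt by (simp add: of_rat_less)
  then show ?thesis
    using add bounds(1) unfolding a_def by blast
qed

end
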